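(* Let $\mu$ be any example distribution. If $\mu$ has finite support, then $\preceq^{\mu}$ is well-founded. This does not necessarily hold when $\mu$ has infinite support: there exists an example distribution $\mu$ with infinite support such that $\preceq^{\mu}$ is not well-founded.
   Context: Data examples are pairs $(I,\mathbf a)$ with $I$ a finite database instance and $\mathbf a$ a tuple of its values. CQs are $q(x_1,\dots,x_k)\text{ :- }\alpha_1,\dots,\alpha_n$ (relational atoms, no constants, each answer variable in some atom); $[\![q]\!]$ is the set of data examples $(I,\mathbf a)$ with $\mathbf a\in q(I)$. An example distribution is a discrete probability distribution $\mu$ over data examples. $\mathrm{dist}_\mu(q,q')=\mu([\![q]\!]\oplus[\![q']\!])$ ($\oplus$ symmetric difference), i.e. the probability of drawing an example on which $q$ and $q'$ disagree. $q'\preceq^{\mu}_q q''$ iff $\mathrm{dist}_\mu(q,q')\le\mathrm{dist}_\mu(q,q'')$. The pre-order family $\preceq^\mu$ is well-founded if for every CQ $q$, every non-empty set of CQs has a $\preceq^\mu_q$-minimal element (equivalently, there is no infinite strictly descending chain $\cdots\prec_q q_2\prec_q q_1\prec_q q_0$, where $\prec_q$ is the strict part of $\preceq^\mu_q$). *)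

theory Defs
  imports "HOL-Probability.Probability_Mass_Function"
begin

type_synonym ('r, 'v) fact = "'r \<times> 'v list"
type_synonym ('r, 'v) inst = "('r, 'v) fact set"
type_synonym ('r, 'v) example = "('r, 'v) inst \<times> 'v list"
text \<open>A CQ: the list of answer variables and the list of relational atoms.\<close>
type_synonym 'r cq = "nat list \<times> ('r \<times> nat list) list"

definition adom :: "('r, 'v) inst \<Rightarrow> 'v set" where
  "adom I = (\<Union>f\<in>I. set (snd f))"

definition is_instance :: "('r \<Rightarrow> nat) \<Rightarrow> ('r, 'v) inst \<Rightarrow> bool" where
  "is_instance ar I \<longleftrightarrow> finite I \<and> (\<forall>f\<in>I. length (snd f) = ar (fst f))"

definition is_data_example :: "('r \<Rightarrow> nat) \<Rightarrow> ('r, 'v) example \<Rightarrow> bool" where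
  "is_data_example ar e \<longleftrightarrow> is_instance ar (fst e) \<and> set (snd e) \<subseteq> adom (fst e)"

definition is_cq :: "('r \<Rightarrow> nat) \<Rightarrow> 'r cq \<Rightarrow> bool" where
  "is_cq ar q \<longleftrightarrow> (\<forall>\<alpha>\<in>set (snd q). length (snd \<alpha>) = ar (fst \<alpha>))
      \<and> set (fst q) \<subseteq> (\<Union>\<alpha>\<in>set (snd q). set (snd \<alpha>))"

definition cq_answers :: "'r cq \<Rightarrow> ('r, 'v) inst \<Rightarrow> 'v list set" where
  "cq_answers q I = {a. \<exists>h :: nat \<Rightarrow> 'v.
      (\<forall>\<alpha>\<in>set (snd q). (fst \<alpha>, map h (snd \<alpha>)) \<in> I) \<and> a = map h (fst q)}"

definition cq_sem :: "('r \<Rightarrow> nat) \<Rightarrow> 'r cq \<Rightarrow> ('r, 'v) example set" where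
  "cq_sem ar q = {e. is_data_example ar e \<and> snd e \<in> cq_answers q (fst e)}"

definition example_distribution :: "('r \<Rightarrow> nat) \<Rightarrow> ('r, 'v) example pmf \<Rightarrow> bool" where
  "example_distribution ar \<mu> \<longleftrightarrow> set_pmf \<mu> \<subseteq> {e. is_data_example ar e}"

definition sym_diff :: "'a set \<Rightarrow> 'a set \<Rightarrow> 'a set" where
  "sym_diff A B = (A - B) \<union> (B - A)"

definition cq_dist :: "('r \<Rightarrow> nat) \<Rightarrow> ('r, 'v) example pmf \<Rightarrow> 'r cq \<Rightarrow> 'r cq \<Rightarrow> real" where
  "cq_dist ar \<mu> q q' = measure_pmf.prob \<mu> (sym_diff (cq_sem ar q) (cq_sem ar q'))"

definition cq_preceq :: "('r \<Rightarrow> nat) \<Rightarrow> ('r, 'v) example pmf \<Rightarrow> 'r cq \<Rightarrow> 'r cq \<Rightarrow> 'r cq \<Rightarrow> bool" where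
  "cq_preceq ar \<mu> q q' q'' \<longleftrightarrow> cq_dist ar \<mu> q q' \<le> cq_dist ar \<mu> q q''"

definition cq_prec :: "('r \<Rightarrow> nat) \<Rightarrow> ('r, 'v) example pmf \<Rightarrow> 'r cq \<Rightarrow> 'r cq \<Rightarrow> 'r cq \<Rightarrow> bool" where
  "cq_prec ar \<mu> q q' q'' \<longleftrightarrow> cq_preceq ar \<mu> q q' q'' \<and> \<not> cq_preceq ar \<mu> q q'' q'"

definition preceq_well_founded :: "('r \<Rightarrow> nat) \<Rightarrow> ('r, 'v) example pmf \<Rightarrow> bool" where
  "preceq_well_founded ar \<mu> \<longleftrightarrow>
     (\<forall>q. is_cq ar q \<longrightarrow>
        (\<forall>S. S \<noteq> {} \<and> S \<subseteq> {q'. is_cq ar q'} \<longrightarrow>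
           (\<exists>m\<in>S. \<forall>q''\<in>S. \<not> cq_prec ar \<mu> q q'' m)))"

end

theory Submission
  imports Defs
begin

text \<open>A pmf with finite support assigns only finitely many probabilities (one per subset of
  the support), so for fixed q the distances to q take finitely many values and the least one
  is attained. For infinite support, take unary relations R_0, R_1, ... and the Boolean
  examples I_k = {R_1(0), ..., R_k(0)} drawn with k geometrically distributed. The query
  \<exists>x. R_0(x) never holds, while \<exists>x. R_(n+1)(x) holds exactly on the I_k with n < k,
  so its distance to the former is P(k > n), which strictly decreases in n.\<close>

lemma cq_prec_iff_dist_less:
  "cq_prec ar \<mu> q q' q'' \<longleftrightarrow> cq_dist ar \<mu> q q' < cq_dist ar \<mu> q q''"
  unfolding cq_prec_def cq_preceq_def by auto

lemma finite_range_prob_if_finite_support: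
  assumes "finite (set_pmf p)"
  shows "finite (range (measure_pmf.prob p))"
proof -
  have "range (measure_pmf.prob p) \<subseteq> measure_pmf.prob p ` Pow (set_pmf p)"
  proof
    fix x assume "x \<in> range (measure_pmf.prob p)"
    then obtain A where "x = measure_pmf.prob p (A \<inter> set_pmf p)"
      by (auto simp: measure_Int_set_pmf)
    then show "x \<in> measure_pmf.prob p ` Pow (set_pmf p)" by blast
  qed
  then show ?thesis
    using assms finite_subset by blast
qed

lemma preceq_well_founded_if_finite_support:
  assumes "finite (set_pmf \<mu>)"
  shows "preceq_well_founded ar \<mu>"
  unfolding preceq_well_founded_def
proof (intro allI impI)
  fix q S
  assume "S \<noteq> {} \<and> S \<subseteq> {q'. is_cq ar q'}"
  then have "S \<noteq> {}" by blast
  let ?d = "cq_dist ar \<mu> q"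
  have "?d ` S \<subseteq> range (measure_pmf.prob \<mu>)"
    unfolding cq_dist_def by blast
  then have fin: "finite (?d ` S)"
    using finite_range_prob_if_finite_support[OF assms] finite_subset by blast
  have "Min (?d ` S) \<in> ?d ` S"
    using Min_in[OF fin] \<open>S \<noteq> {}\<close> by blast
  then obtain m where "m \<in> S" and m_min: "?d m = Min (?d ` S)"
    by (metis imageE)
  have "\<not> cq_prec ar \<mu> q q'' m" if "q'' \<in> S" for q''
    using Min_le[OF fin] that m_min by (simp add: cq_prec_iff_dist_less not_less)
  then show "\<exists>m\<in>S. \<forall>q''\<in>S. \<not> cq_prec ar \<mu> q q'' m"
    using \<open>m \<in> S\<close> by blast
qed

lemma not_preceq_well_founded_if_dist_strict_decseq:
  assumes "is_cq ar q" and "\<And>n. is_cq ar (qs n)"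
    and "\<And>n. cq_dist ar \<mu> q (qs (Suc n)) < cq_dist ar \<mu> q (qs n)"
  shows "\<not> preceq_well_founded ar \<mu>"
proof
  assume "preceq_well_founded ar \<mu>"
  moreover have "range qs \<noteq> {} \<and> range qs \<subseteq> {q'. is_cq ar q'}"
    using assms(2) by auto
  ultimately obtain n where "\<forall>q''\<in>range qs. \<not> cq_prec ar \<mu> q q'' (qs n)"
    using assms(1) unfolding preceq_well_founded_def by blast
  then show False
    using assms(3) by (auto simp: cq_prec_iff_dist_less)
qed

lemma prob_greaterThan_Suc_less:
  assumes "Suc n \<in> set_pmf p"
  shows "measure_pmf.prob p {Suc n<..} < measure_pmf.prob p {n<..}"
proof -
  have "{n<..} = insert (Suc n) {Suc n<..}" by auto
  then have "measure_pmf.prob p {n<..} = pmf p (Suc n) + measure_pmf.prob p {Suc n<..}"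
    by (simp add: measure_pmf.finite_measure_Union[of "{Suc n}", simplified] measure_pmf_single)
  then show ?thesis
    using pmf_positive[OF assms] by simp
qed

definition unary_schema :: "nat \<Rightarrow> nat" where
  "unary_schema R = 1"

definition prefix_inst :: "nat \<Rightarrow> (nat, nat) inst" where
  "prefix_inst k = (\<lambda>j. (j, [0])) ` {1..k}"

definition exists_atom_cq :: "nat \<Rightarrow> nat cq" where
  "exists_atom_cq R = ([], [(R, [0])])"

definition prefix_dist :: "(nat, nat) example pmf" where
  "prefix_dist = map_pmf (\<lambda>k. (prefix_inst k, [])) (geometric_pmf (1/2))"

lemma card_prefix_inst: "card (prefix_inst k) = k"
  unfolding prefix_inst_def by (subst card_image) (auto intro: inj_onI)

lemma data_example_prefix_inst: "is_data_example unary_schema (prefix_inst k, [])"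
  unfolding is_data_example_def is_instance_def prefix_inst_def unary_schema_def by auto

lemma is_cq_exists_atom_cq: "is_cq unary_schema (exists_atom_cq R)"
  unfolding is_cq_def exists_atom_cq_def unary_schema_def by simp

lemma prefix_inst_in_cq_sem_exists_atom_cq:
  "(prefix_inst k, []) \<in> cq_sem unary_schema (exists_atom_cq R) \<longleftrightarrow> R \<in> {1..k}"
proof -
  have "(prefix_inst k, []) \<in> cq_sem unary_schema (exists_atom_cq R)
          \<longleftrightarrow> (\<exists>v. (R, [v]) \<in> prefix_inst k)"
    using data_example_prefix_inst[of k]
    by (auto simp: cq_sem_def cq_answers_def exists_atom_cq_def)
  also have "\<dots> \<longleftrightarrow> R \<in> {1..k}"
    unfolding prefix_inst_def by force
  finally show ?thesis .
qed

lemma cq_dist_prefix_dist: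
  "cq_dist unary_schema prefix_dist (exists_atom_cq 0) (exists_atom_cq (Suc n))
     = measure_pmf.prob (geometric_pmf (1/2)) {n<..}"
proof -
  have "(\<lambda>k. (prefix_inst k, [])) -` sym_diff (cq_sem unary_schema (exists_atom_cq 0))
          (cq_sem unary_schema (exists_atom_cq (Suc n))) = {n<..}"
    by (auto simp: sym_diff_def prefix_inst_in_cq_sem_exists_atom_cq)
  then show ?thesis
    unfolding cq_dist_def prefix_dist_def by simp
qed

lemma prefix_dist_counterexample:
  "example_distribution unary_schema prefix_dist \<and> infinite (set_pmf prefix_dist)
     \<and> \<not> preceq_well_founded unary_schema prefix_dist"
proof (intro conjI)
  show "example_distribution unary_schema prefix_dist"
    unfolding example_distribution_def prefix_dist_def using data_example_prefix_inst by auto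
  have "inj (\<lambda>k. (prefix_inst k, [] :: nat list))"
    by (rule injI) (metis card_prefix_inst prod.inject)
  moreover have "set_pmf prefix_dist = range (\<lambda>k. (prefix_inst k, []))"
    unfolding prefix_dist_def by (simp add: set_pmf_geometric)
  ultimately show "infinite (set_pmf prefix_dist)"
    by (simp add: range_inj_infinite)
  show "\<not> preceq_well_founded unary_schema prefix_dist"
    by (rule not_preceq_well_founded_if_dist_strict_decseq
          [of _ "exists_atom_cq 0" "\<lambda>n. exists_atom_cq (Suc n)"])
      (simp_all add: is_cq_exists_atom_cq cq_dist_prefix_dist prob_greaterThan_Suc_less set_pmf_geometric)
qed

theorem proposition52:
  fixes ar :: "'r \<Rightarrow> nat"
  shows "(\<forall>\<mu> :: ('r, 'v) example pmf.
            example_distribution ar \<mu> \<and> finite (set_pmf \<mu>) \<longrightarrow> preceq_well_founded ar \<mu>)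
       \<and> (\<exists>(ar' :: nat \<Rightarrow> nat) (\<mu> :: (nat, nat) example pmf).
            example_distribution ar' \<mu> \<and> infinite (set_pmf \<mu>) \<and> \<not> preceq_well_founded ar' \<mu>)"
  using preceq_well_founded_if_finite_support prefix_dist_counterexample by blast

end
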